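(* Let $\kappa\ge0$ and let $\lambda^w_a\in[\tfrac1{1+\kappa},1]$ for all $a\in\mathcal A$, $w\in\mathcal W$, and define the perceived path travel times $\tilde c^w_p(\mathbf f)=\sum_{a\in\mathcal A}\delta^p_a\lambda^w_a t_a(\mathbf v)$ for $p\in\mathcal P_w$. (i) If $\bar{\mathbf f}\in\mathbf F$ satisfies $\sum_{w\in\mathcal W}\sum_{p\in\mathcal P_w}\tilde c^w_p(\bar{\mathbf f})(f_p-\bar f_p)\ge0$ for all $\mathbf f\in\mathbf F$, then the OD-specific arc flow $\bar{\mathbf x}$ induced by $\bar{\mathbf f}$ satisfies $\sum_{a\in\mathcal A}\sum_{w\in\mathcal W}\lambda^w_a t_a(\bar{\mathbf v})(x^w_a-\bar x^w_a)\ge0$ for all $\mathbf x\in\mathbf X$. (ii) Conversely, if $\bar{\mathbf x}\in\mathbf X$ satisfies the latter inequality for all $\mathbf x\in\mathbf X$, then every $\bar{\mathbf f}\in\mathbf F$ inducing $\bar{\mathbf x}$ (i.e. $\bar x^w_a=\sum_{p\in\mathcal P_w}\delta^p_a\bar f_p$) satisfies the former inequality for all $\mathbf f\in\mathbf F$. Here $\bar{\mathbf v}$ denotes the arc flow with $\bar v_a=\sum_w\bar x^w_a$.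
   Context: Let $G=(\mathcal N,\mathcal A)$ be a finite directed graph and $\mathcal W$ a finite set of OD pairs; each $w$ has demand $Q_w>0$ and a finite set $\mathcal P_w$ of paths from its origin to its destination; $\mathcal P=\bigcup_w\mathcal P_w$; $\delta^p_a=1$ if arc $a$ lies on path $p$ and $0$ otherwise. Feasible path flows: $\mathbf F=\{\mathbf f\ge0:\sum_{p\in\mathcal P_w}f_p=Q_w\ \forall w\}$. A path flow induces arc flows $v_a=\sum_{p\in\mathcal P}\delta^p_af_p$ and OD-specific arc flows $x^w_a=\sum_{p\in\mathcal P_w}\delta^p_af_p$; $\mathbf X$ is the set of OD-specific arc flows induced by some $\mathbf f\in\mathbf F$. Each arc $a$ has a travel time function $t_a(\mathbf v)$ of the arc-flow vector. *)

theory Defs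
  imports "HOL-Analysis.Analysis"
begin

text \<open>Network data: arcs of type 'a (set A), OD pairs of type 'w (set W),
  paths of type 'p; Pw w is the path set of OD pair w; delta p a is the
  arc-path incidence; Q w the demand.\<close>

definition all_paths :: "'w set \<Rightarrow> ('w \<Rightarrow> 'p set) \<Rightarrow> 'p set" where
  "all_paths W Pw = (\<Union>w\<in>W. Pw w)"

definition feasible_flows ::
  "'w set \<Rightarrow> ('w \<Rightarrow> 'p set) \<Rightarrow> ('w \<Rightarrow> real) \<Rightarrow> ('p \<Rightarrow> real) set" where
  "feasible_flows W Pw Q =
     {f. (\<forall>p\<in>all_paths W Pw. f p \<ge> 0) \<and> (\<forall>w\<in>W. (\<Sum>p\<in>Pw w. f p) = Q w)}"

definition od_arc_flow ::
  "('w \<Rightarrow> 'p set) \<Rightarrow> ('p \<Rightarrow> 'a \<Rightarrow> real) \<Rightarrow> ('p \<Rightarrow> real) \<Rightarrow> 'w \<Rightarrow> 'a \<Rightarrow> real" where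
  "od_arc_flow Pw delta f w a = (\<Sum>p\<in>Pw w. delta p a * f p)"

definition arc_flow ::
  "'w set \<Rightarrow> 'a set \<Rightarrow> ('w \<Rightarrow> 'p set) \<Rightarrow> ('p \<Rightarrow> 'a \<Rightarrow> real) \<Rightarrow> ('p \<Rightarrow> real) \<Rightarrow> 'a \<Rightarrow> real" where
  "arc_flow W A Pw delta f a = (if a \<in> A then (\<Sum>p\<in>all_paths W Pw. delta p a * f p) else 0)"

definition arc_flow_of_od :: "'w set \<Rightarrow> 'a set \<Rightarrow> ('w \<Rightarrow> 'a \<Rightarrow> real) \<Rightarrow> 'a \<Rightarrow> real" where
  "arc_flow_of_od W A x a = (if a \<in> A then (\<Sum>w\<in>W. x w a) else 0)"

text \<open>The set X of OD-specific arc flows induced by some feasible path flow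
  (compared on W x A, the only relevant coordinates).\<close>
definition induces ::
  "'w set \<Rightarrow> 'a set \<Rightarrow> ('w \<Rightarrow> 'p set) \<Rightarrow> ('p \<Rightarrow> 'a \<Rightarrow> real) \<Rightarrow> ('p \<Rightarrow> real)
     \<Rightarrow> ('w \<Rightarrow> 'a \<Rightarrow> real) \<Rightarrow> bool" where
  "induces W A Pw delta f x \<longleftrightarrow> (\<forall>w\<in>W. \<forall>a\<in>A. x w a = od_arc_flow Pw delta f w a)"

definition feasible_od_flows ::
  "'w set \<Rightarrow> 'a set \<Rightarrow> ('w \<Rightarrow> 'p set) \<Rightarrow> ('w \<Rightarrow> real) \<Rightarrow> ('p \<Rightarrow> 'a \<Rightarrow> real)
     \<Rightarrow> ('w \<Rightarrow> 'a \<Rightarrow> real) set" where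
  "feasible_od_flows W A Pw Q delta =
     {x. \<exists>f\<in>feasible_flows W Pw Q. induces W A Pw delta f x}"

definition perceived_cost ::
  "'w set \<Rightarrow> 'a set \<Rightarrow> ('w \<Rightarrow> 'p set) \<Rightarrow> ('p \<Rightarrow> 'a \<Rightarrow> real) \<Rightarrow> ('w \<Rightarrow> 'a \<Rightarrow> real)
     \<Rightarrow> ('a \<Rightarrow> ('a \<Rightarrow> real) \<Rightarrow> real) \<Rightarrow> 'w \<Rightarrow> 'p \<Rightarrow> ('p \<Rightarrow> real) \<Rightarrow> real" where
  "perceived_cost W A Pw delta lam t w p f =
     (\<Sum>a\<in>A. delta p a * lam w a * t a (arc_flow W A Pw delta f))"

end

theory Submission
  imports Defs
begin

text \<open>Both variational inequalities express the nonnegativity of one and the same gap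
  function: exchanging the sums over paths and arcs rewrites the path-based gap of a path
  flow exactly as the arc-based gap of the OD-specific arc flows it induces, and arc flows
  computed from the induced OD-specific arc flows agree with those computed from the path
  flow because the path sets of distinct OD pairs are disjoint. The equivalence is thus an
  identity.\<close>

definition path_gap ::
  "'w set \<Rightarrow> 'a set \<Rightarrow> ('w \<Rightarrow> 'p set) \<Rightarrow> ('p \<Rightarrow> 'a \<Rightarrow> real) \<Rightarrow> ('w \<Rightarrow> 'a \<Rightarrow> real)
     \<Rightarrow> ('a \<Rightarrow> ('a \<Rightarrow> real) \<Rightarrow> real) \<Rightarrow> ('p \<Rightarrow> real) \<Rightarrow> ('p \<Rightarrow> real) \<Rightarrow> real" where
  "path_gap W A Pw delta lam t fb f =
     (\<Sum>w\<in>W. \<Sum>p\<in>Pw w. perceived_cost W A Pw delta lam t w p fb * (f p - fb p))"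

definition od_arc_gap ::
  "'w set \<Rightarrow> 'a set \<Rightarrow> ('w \<Rightarrow> 'a \<Rightarrow> real) \<Rightarrow> ('a \<Rightarrow> real)
     \<Rightarrow> ('w \<Rightarrow> 'a \<Rightarrow> real) \<Rightarrow> ('w \<Rightarrow> 'a \<Rightarrow> real) \<Rightarrow> real" where
  "od_arc_gap W A lam c xb x = (\<Sum>a\<in>A. \<Sum>w\<in>W. lam w a * c a * (x w a - xb w a))"

lemma od_arc_gap_cong:
  assumes "\<forall>w\<in>W. \<forall>a\<in>A. xb w a = xb' w a" and "\<forall>w\<in>W. \<forall>a\<in>A. x w a = x' w a"
  shows "od_arc_gap W A lam c xb x = od_arc_gap W A lam c xb' x'"
  unfolding od_arc_gap_def using assms by (intro sum.cong refl) auto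

lemma path_gap_eq_od_arc_gap:
  assumes "finite A" and "finite W" and "\<forall>w\<in>W. finite (Pw w)"
  shows "path_gap W A Pw delta lam t fb f =
    od_arc_gap W A lam (\<lambda>a. t a (arc_flow W A Pw delta fb))
      (od_arc_flow Pw delta fb) (od_arc_flow Pw delta f)"
proof -
  let ?c = "\<lambda>a. t a (arc_flow W A Pw delta fb)"
  have "path_gap W A Pw delta lam t fb f
     = (\<Sum>w\<in>W. \<Sum>p\<in>Pw w. \<Sum>a\<in>A. lam w a * ?c a * (delta p a * f p - delta p a * fb p))"
    unfolding path_gap_def perceived_cost_def sum_distrib_right
    by (intro sum.cong refl) (simp add: algebra_simps)
  also have "\<dots> = (\<Sum>a\<in>A. \<Sum>w\<in>W. \<Sum>p\<in>Pw w. lam w a * ?c a * (delta p a * f p - delta p a * fb p))"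
    by (simp only: sum.swap[of _ A])
  also have "\<dots> = od_arc_gap W A lam ?c (od_arc_flow Pw delta fb) (od_arc_flow Pw delta f)"
    unfolding od_arc_gap_def od_arc_flow_def
    by (simp add: sum_distrib_left sum_subtractf[symmetric])
  finally show ?thesis .
qed

lemma arc_flow_of_od_induced:
  assumes "finite W" and "\<forall>w\<in>W. finite (Pw w)"
    and "\<forall>w1\<in>W. \<forall>w2\<in>W. w1 \<noteq> w2 \<longrightarrow> Pw w1 \<inter> Pw w2 = {}"
    and "induces W A Pw delta fb xb"
  shows "arc_flow_of_od W A xb = arc_flow W A Pw delta fb"
proof
  fix a
  show "arc_flow_of_od W A xb a = arc_flow W A Pw delta fb a"
  proof (cases "a \<in> A")
    case True
    have "(\<Sum>p\<in>all_paths W Pw. delta p a * fb p) = (\<Sum>w\<in>W. \<Sum>p\<in>Pw w. delta p a * fb p)"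
      unfolding all_paths_def using assms(1-3) by (subst sum.UNION_disjoint) auto
    also have "\<dots> = (\<Sum>w\<in>W. xb w a)"
      using assms(4) True unfolding induces_def od_arc_flow_def by simp
    finally show ?thesis
      using True unfolding arc_flow_def arc_flow_of_od_def by simp
  qed (simp add: arc_flow_def arc_flow_of_od_def)
qed

lemma od_arc_flow_feasible:
  "f \<in> feasible_flows W Pw Q \<Longrightarrow> od_arc_flow Pw delta f \<in> feasible_od_flows W A Pw Q delta"
  unfolding feasible_od_flows_def induces_def by blast

theorem lemma2:
  fixes A :: "'a set" and W :: "'w set" and Pw :: "'w \<Rightarrow> 'p set"
    and Q :: "'w \<Rightarrow> real" and delta :: "'p \<Rightarrow> 'a \<Rightarrow> real"
    and t :: "'a \<Rightarrow> ('a \<Rightarrow> real) \<Rightarrow> real"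
    and kappa :: real and lam :: "'w \<Rightarrow> 'a \<Rightarrow> real"
  assumes finA: "finite A" and finW: "finite W"
    and finP: "\<forall>w\<in>W. finite (Pw w)"
    and disjP: "\<forall>w1\<in>W. \<forall>w2\<in>W. w1 \<noteq> w2 \<longrightarrow> Pw w1 \<inter> Pw w2 = {}"
    and Qpos: "\<forall>w\<in>W. Q w > 0"
    and delta01: "\<forall>p a. delta p a = 0 \<or> delta p a = 1"
    and delta_arcs: "\<forall>p\<in>all_paths W Pw. \<forall>a. a \<notin> A \<longrightarrow> delta p a = 0"
    and kappa: "kappa \<ge> 0"
    and lam: "\<forall>w\<in>W. \<forall>a\<in>A. 1 / (1 + kappa) \<le> lam w a \<and> lam w a \<le> 1"
  shows
   "(\<forall>fb\<in>feasible_flows W Pw Q.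
       (\<forall>f\<in>feasible_flows W Pw Q.
          (\<Sum>w\<in>W. \<Sum>p\<in>Pw w. perceived_cost W A Pw delta lam t w p fb * (f p - fb p)) \<ge> 0)
       \<longrightarrow> (\<forall>x\<in>feasible_od_flows W A Pw Q delta.
          (\<Sum>a\<in>A. \<Sum>w\<in>W. lam w a * t a (arc_flow W A Pw delta fb)
              * (x w a - od_arc_flow Pw delta fb w a)) \<ge> 0))
    \<and>
    (\<forall>xb\<in>feasible_od_flows W A Pw Q delta.
       (\<forall>x\<in>feasible_od_flows W A Pw Q delta.
          (\<Sum>a\<in>A. \<Sum>w\<in>W. lam w a * t a (arc_flow_of_od W A xb) * (x w a - xb w a)) \<ge> 0)
       \<longrightarrow> (\<forall>fb\<in>feasible_flows W Pw Q. induces W A Pw delta fb xb \<longrightarrow>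
          (\<forall>f\<in>feasible_flows W Pw Q.
             (\<Sum>w\<in>W. \<Sum>p\<in>Pw w. perceived_cost W A Pw delta lam t w p fb * (f p - fb p)) \<ge> 0)))"
  unfolding path_gap_def[symmetric] od_arc_gap_def[symmetric]
proof (intro conjI ballI impI)
  fix fb x
  assume path_vi: "\<forall>f\<in>feasible_flows W Pw Q. path_gap W A Pw delta lam t fb f \<ge> 0"
    and "x \<in> feasible_od_flows W A Pw Q delta"
  then obtain f where f: "f \<in> feasible_flows W Pw Q" and "induces W A Pw delta f x"
    unfolding feasible_od_flows_def by blast
  then have "od_arc_gap W A lam (\<lambda>a. t a (arc_flow W A Pw delta fb)) (od_arc_flow Pw delta fb) x
      = path_gap W A Pw delta lam t fb f"
    unfolding path_gap_eq_od_arc_gap[OF finA finW finP] induces_def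
    by (intro od_arc_gap_cong) auto
  with path_vi f
  show "od_arc_gap W A lam (\<lambda>a. t a (arc_flow W A Pw delta fb)) (od_arc_flow Pw delta fb) x \<ge> 0"
    by simp
next
  fix xb fb f
  assume arc_vi: "\<forall>x\<in>feasible_od_flows W A Pw Q delta.
      od_arc_gap W A lam (\<lambda>a. t a (arc_flow_of_od W A xb)) xb x \<ge> 0"
    and fb_xb: "induces W A Pw delta fb xb" and f: "f \<in> feasible_flows W Pw Q"
  have "path_gap W A Pw delta lam t fb f
      = od_arc_gap W A lam (\<lambda>a. t a (arc_flow_of_od W A xb)) xb (od_arc_flow Pw delta f)"
    unfolding path_gap_eq_od_arc_gap[OF finA finW finP] arc_flow_of_od_induced[OF finW finP disjP fb_xb]
    using fb_xb unfolding induces_def by (intro od_arc_gap_cong) auto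
  with arc_vi od_arc_flow_feasible[OF f] show "path_gap W A Pw delta lam t fb f \<ge> 0"
    by auto
qed

end
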